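(* Let $k\ge 1$ be an integer and let $G$ be a $k$-regular graph. Then $G$ has a $k$-conversion set of size $k$ (that is, $c_k(G)=k$) if and only if $G=H\vee\overline{K_{k-t}}$, where $H$ is a $t$-regular graph of order $k$ and $0\le t<k$.
   Context: For a graph $G=(V,E)$, a positive integer $k$ and a set $S_0\subseteq V$, the irreversible $k$-threshold conversion process is defined by: for $t=1,2,\dots$, $S_t$ is obtained from $S_{t-1}$ by adjoining all vertices having at least $k$ neighbours in $S_{t-1}$. The set $S_0$ is a $k$-conversion set of $G$ if $S_t=V(G)$ for some $t\ge 0$. The $k$-conversion number $c_k(G)$ is the minimum size of a $k$-conversion set of $G$. For graphs $G,H$, $G\vee H$ denotes the join (disjoint union plus all edges between $G$ and $H$), and $\overline{K_m}$ is the edgeless graph on $m$ vertices. *)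

theory Defs
  imports Main
begin

definition graph :: "'a set \<Rightarrow> ('a \<Rightarrow> 'a \<Rightarrow> bool) \<Rightarrow> bool" where
  "graph V E \<longleftrightarrow> finite V \<and> (\<forall>u v. E u v \<longrightarrow> u \<in> V \<and> v \<in> V)
     \<and> (\<forall>u v. E u v \<longrightarrow> E v u) \<and> (\<forall>v. \<not> E v v)"

definition degree :: "'a set \<Rightarrow> ('a \<Rightarrow> 'a \<Rightarrow> bool) \<Rightarrow> 'a \<Rightarrow> nat" where
  "degree V E v = card {u \<in> V. E v u}"

definition regular :: "'a set \<Rightarrow> ('a \<Rightarrow> 'a \<Rightarrow> bool) \<Rightarrow> nat \<Rightarrow> bool" where
  "regular V E r \<longleftrightarrow> (\<forall>v \<in> V. degree V E v = r)"

definition conv_step :: "'a set \<Rightarrow> ('a \<Rightarrow> 'a \<Rightarrow> bool) \<Rightarrow> nat \<Rightarrow> 'a set \<Rightarrow> 'a set" where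
  "conv_step V E k S = S \<union> {v \<in> V. k \<le> card {u \<in> S. E v u}}"

definition conversion_set :: "'a set \<Rightarrow> ('a \<Rightarrow> 'a \<Rightarrow> bool) \<Rightarrow> nat \<Rightarrow> 'a set \<Rightarrow> bool" where
  "conversion_set V E k S0 \<longleftrightarrow> S0 \<subseteq> V \<and> (\<exists>t. (conv_step V E k ^^ t) S0 = V)"

definition conversion_number :: "'a set \<Rightarrow> ('a \<Rightarrow> 'a \<Rightarrow> bool) \<Rightarrow> nat \<Rightarrow> nat" where
  "conversion_number V E k = (LEAST n. \<exists>S. conversion_set V E k S \<and> card S = n)"

definition join_V :: "'a set \<Rightarrow> 'b set \<Rightarrow> ('a + 'b) set" where
  "join_V V1 V2 = Inl ` V1 \<union> Inr ` V2"

fun join_E :: "'a set \<Rightarrow> ('a \<Rightarrow> 'a \<Rightarrow> bool) \<Rightarrow> 'b set \<Rightarrow> ('b \<Rightarrow> 'b \<Rightarrow> bool)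
    \<Rightarrow> ('a + 'b) \<Rightarrow> ('a + 'b) \<Rightarrow> bool" where
  "join_E V1 E1 V2 E2 (Inl a) (Inl b) = E1 a b"
| "join_E V1 E1 V2 E2 (Inr a) (Inr b) = E2 a b"
| "join_E V1 E1 V2 E2 (Inl a) (Inr b) = (a \<in> V1 \<and> b \<in> V2)"
| "join_E V1 E1 V2 E2 (Inr a) (Inl b) = (a \<in> V2 \<and> b \<in> V1)"

definition empty_V :: "nat \<Rightarrow> nat set" where "empty_V m = {0..<m}"
definition empty_E :: "nat \<Rightarrow> nat \<Rightarrow> bool" where "empty_E u v = False"

definition graph_iso :: "'a set \<Rightarrow> ('a \<Rightarrow> 'a \<Rightarrow> bool) \<Rightarrow> 'b set \<Rightarrow> ('b \<Rightarrow> 'b \<Rightarrow> bool) \<Rightarrow> bool" where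
  "graph_iso V1 E1 V2 E2 \<longleftrightarrow> (\<exists>f. bij_betw f V1 V2 \<and>
     (\<forall>u \<in> V1. \<forall>v \<in> V1. E1 u v \<longleftrightarrow> E2 (f u) (f v)))"

end

theory Submission
  imports Defs
begin

text \<open>Let \<open>S\<close> be a \<open>k\<close>-conversion set of size \<open>k\<close> in a \<open>k\<close>-regular graph and let \<open>X\<close> be the
  set of vertices whose neighbourhood is exactly \<open>S\<close>. No vertex outside \<open>S \<union> X\<close> can acquire
  \<open>k\<close> neighbours in \<open>S \<union> X\<close>: its whole neighbourhood would have to lie there, it has no
  neighbour in \<open>X\<close>, so its neighbourhood would be \<open>S\<close>. Hence \<open>S \<union> X\<close> is closed under the
  process and must be all of \<open>V\<close>, which says precisely that \<open>G\<close> is the join of \<open>G[S]\<close> with an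
  edgeless graph; \<open>G[S]\<close> is \<open>(k - |X|)\<close>-regular. Conversely, in such a join the copy of \<open>H\<close>
  converts everything in one step, and no set of fewer than \<open>k\<close> vertices can grow at all.\<close>

lemma finite_adjacent: "graph V E \<Longrightarrow> finite {u \<in> A. E v u}"
  unfolding graph_def by (auto intro: finite_subset[of _ V])

lemma mono_conv_step:
  assumes "graph V E"
  shows "mono (conv_step V E k)"
proof (rule monoI)
  fix A B :: "'a set" assume "A \<subseteq> B"
  then have "card {u \<in> A. E v u} \<le> card {u \<in> B. E v u}" for v
    using assms by (intro card_mono) (auto intro: finite_adjacent)
  then show "conv_step V E k A \<subseteq> conv_step V E k B"
    using \<open>A \<subseteq> B\<close> unfolding conv_step_def by (auto intro: le_trans)
qed

lemma funpow_le_closed: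
  assumes "mono f" "A \<le> B" "f B \<le> B"
  shows "(f ^^ n) A \<le> B"
proof (induction n)
  case (Suc n)
  then have "f ((f ^^ n) A) \<le> f B" using assms(1) by (simp add: monoD)
  then show ?case using assms(3) by simp
qed (use assms(2) in simp)

lemma conv_step_fixed_if_card_less:
  assumes "graph V E" "S \<subseteq> V" "card S < k"
  shows "conv_step V E k S = S"
proof -
  have "finite S" using assms(1,2) unfolding graph_def by (meson rev_finite_subset)
  then have "card {u \<in> S. E v u} \<le> card S" for v
    by (intro card_mono) auto
  then have "card {u \<in> S. E v u} < k" for v
    using assms(3) le_less_trans by blast
  then show ?thesis unfolding conv_step_def by (auto simp: not_le[symmetric])
qed

lemma conversion_set_card_ge:
  assumes "graph V E" "conversion_set V E k S" "S \<noteq> V"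
  shows "k \<le> card S"
proof (rule ccontr)
  assume "\<not> k \<le> card S"
  moreover obtain n where "S \<subseteq> V" "(conv_step V E k ^^ n) S = V"
    using assms(2) unfolding conversion_set_def by blast
  ultimately have "(conv_step V E k ^^ n) S \<subseteq> S"
    using assms(1) by (intro funpow_le_closed mono_conv_step) (auto simp: conv_step_fixed_if_card_less)
  then show False using \<open>S \<subseteq> V\<close> \<open>(conv_step V E k ^^ n) S = V\<close> assms(3) by simp
qed

lemma conversion_number_attained:
  "\<exists>S. conversion_set V E k S \<and> card S = conversion_number V E k"
proof -
  have "conversion_set V E k V" unfolding conversion_set_def by (auto intro: exI[of _ 0])
  then have "\<exists>n S. conversion_set V E k S \<and> card S = n" by blast
  then show ?thesis unfolding conversion_number_def by (rule LeastI_ex)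
qed

lemma conversion_number_eqI:
  assumes "graph V E" "conversion_set V E k S" "card S = k" "k < card V"
  shows "conversion_number V E k = k"
  unfolding conversion_number_def
proof (rule Least_equality)
  fix n assume "\<exists>S'. conversion_set V E k S' \<and> card S' = n"
  then show "k \<le> n" using conversion_set_card_ge[OF assms(1)] assms(4) by fastforce
qed (use assms(2,3) in blast)

lemma regular_degree_less_card:
  assumes "graph V E" "regular V E k" "v \<in> V"
  shows "k < card V"
proof -
  have "finite V" "{u \<in> V. E v u} \<subseteq> V - {v}" using assms(1) unfolding graph_def by auto
  then have "card {u \<in> V. E v u} < card V"
    using assms(3) card_Diff1_less card_mono finite_Diff le_less_trans by metis
  then show ?thesis using assms(2,3) unfolding regular_def degree_def by simp
qed

lemma adjacent_iff_mem_conversion_set: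
  assumes g: "graph V E" and r: "regular V E k"
    and conv: "conversion_set V E k S" and card_S: "card S = k" and v: "v \<in> V - S"
  shows "E v u \<longleftrightarrow> u \<in> S"
proof -
  have fin: "finite V" and E_in_V: "\<And>u v. E u v \<Longrightarrow> u \<in> V \<and> v \<in> V"
    and sym: "\<And>u v. E u v \<Longrightarrow> E v u" using g unfolding graph_def by auto
  have deg: "card {u \<in> V. E w u} = k" if "w \<in> V" for w
    using r that unfolding regular_def degree_def by blast
  have S_V: "S \<subseteq> V" using conv unfolding conversion_set_def by blast
  define X where "X = {w \<in> V - S. {u \<in> V. E w u} = S}"
  have "w \<in> S \<union> X" if w: "w \<in> V" and many: "k \<le> card {u \<in> S \<union> X. E w u}" for w
  proof (rule ccontr)
    assume w_out: "w \<notin> S \<union> X"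
    have "{u \<in> S \<union> X. E w u} \<subseteq> {u \<in> V. E w u}" using S_V X_def by auto
    then have "{u \<in> S \<union> X. E w u} = {u \<in> V. E w u}"
      using many deg[OF w] fin by (intro card_seteq) auto
    moreover have "\<not> E w x" if "x \<in> X" for x
    proof
      assume "E w x"
      then have "w \<in> {u \<in> V. E x u}" using sym w by blast
      then show False using that w_out unfolding X_def by blast
    qed
    ultimately have "{u \<in> V. E w u} \<subseteq> S" by blast
    moreover have "finite S" using S_V fin by (rule finite_subset)
    ultimately have "{u \<in> V. E w u} = S"
      using deg[OF w] card_S by (simp add: card_seteq)
    then show False using w w_out unfolding X_def by blast
  qed
  then have "conv_step V E k (S \<union> X) \<subseteq> S \<union> X" unfolding conv_step_def by blast
  moreover obtain n where "(conv_step V E k ^^ n) S = V"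
    using conv unfolding conversion_set_def by blast
  ultimately have "V \<subseteq> S \<union> X" by (metis funpow_le_closed[OF mono_conv_step[OF g]] Un_upper1)
  then have "{u \<in> V. E v u} = S" using v unfolding X_def by blast
  then show ?thesis using E_in_V by blast
qed

definition induced :: "'a set \<Rightarrow> ('a \<Rightarrow> 'a \<Rightarrow> bool) \<Rightarrow> 'a \<Rightarrow> 'a \<Rightarrow> bool" where
  "induced S E u v \<longleftrightarrow> E u v \<and> u \<in> S \<and> v \<in> S"

lemma graph_induced: "graph V E \<Longrightarrow> S \<subseteq> V \<Longrightarrow> graph S (induced S E)"
  unfolding graph_def induced_def by (auto intro: finite_subset)

lemma degree_eq_degree_induced_add:
  assumes "graph V E" "S \<subseteq> V" "s \<in> S" "\<And>v. v \<in> V - S \<Longrightarrow> E s v"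
  shows "degree V E s = degree S (induced S E) s + card (V - S)"
proof -
  have "finite V" using assms(1) unfolding graph_def by blast
  have "{u \<in> V. E s u} = {u \<in> S. induced S E s u} \<union> (V - S)"
    using assms unfolding induced_def by blast
  moreover have "card ({u \<in> S. induced S E s u} \<union> (V - S)) = card {u \<in> S. induced S E s u} + card (V - S)"
    using \<open>finite V\<close> assms(2) by (intro card_Un_disjoint) (auto intro: finite_subset)
  ultimately show ?thesis unfolding degree_def by simp
qed

lemma graph_iso_join_empty:
  assumes g: "graph V E" and "S \<subseteq> V" and adj: "\<And>v u. v \<in> V - S \<Longrightarrow> E v u \<longleftrightarrow> u \<in> S"
  shows "graph_iso V E (join_V S (empty_V (card (V - S))))
           (join_E S (induced S E) (empty_V (card (V - S))) empty_E)"
proof -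
  have "finite (V - S)" using g unfolding graph_def by blast
  then obtain h where h: "bij_betw h (V - S) {0..<card (V - S)}"
    using ex_bij_betw_finite_nat by blast
  define f where "f v = (if v \<in> S then Inl v else Inr (h v))" for v
  have "bij_betw f S (Inl ` S)"
    by (rule bij_betw_cong[THEN iffD1, of _ Inl]) (auto simp: f_def bij_betw_def)
  moreover have "bij_betw f (V - S) (Inr ` {0..<card (V - S)})"
    using bij_betw_trans[OF h, of Inr] unfolding bij_betw_def inj_on_def f_def by (auto simp: image_image)
  ultimately have "bij_betw f (S \<union> (V - S)) (Inl ` S \<union> Inr ` {0..<card (V - S)})"
    by (rule bij_betw_combine) blast
  then have "bij_betw f V (join_V S (empty_V (card (V - S))))"
    using \<open>S \<subseteq> V\<close> by (simp add: join_V_def empty_V_def Un_absorb1)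
  moreover have "E u v \<longleftrightarrow> join_E S (induced S E) (empty_V (card (V - S))) empty_E (f u) (f v)"
    if uv: "u \<in> V" "v \<in> V" for u v
  proof -
    have h_in: "h w \<in> empty_V (card (V - S))" if "w \<in> V - S" for w
      using h that unfolding bij_betw_def empty_V_def by blast
    have "E u v \<longleftrightarrow> E v u" using g unfolding graph_def by blast
    consider "u \<in> S" "v \<in> S" | "u \<in> S" "v \<in> V - S" | "u \<in> V - S" "v \<in> S"
      | "u \<in> V - S" "v \<in> V - S"
      using uv by blast
    then show ?thesis
    proof cases
      case 1
      then show ?thesis by (simp add: f_def induced_def)
    next
      case 2
      then show ?thesis using adj[of v u] h_in \<open>E u v \<longleftrightarrow> E v u\<close> by (simp add: f_def)
    next
      case 3
      then show ?thesis using adj[of u v] h_in by (simp add: f_def)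
    next
      case 4
      then show ?thesis using adj[of u v] by (simp add: f_def empty_E_def)
    qed
  qed
  ultimately show ?thesis unfolding graph_iso_def by blast
qed

lemma graph_iso_join_emptyE:
  assumes "graph_iso V E (join_V HV (empty_V m)) (join_E HV HE (empty_V m) empty_E)"
  obtains S where "S \<subseteq> V" "card S = card HV" "card (V - S) = m"
    "\<And>v u. v \<in> V - S \<Longrightarrow> u \<in> S \<Longrightarrow> E v u"
proof -
  obtain f where bij: "bij_betw f V (Inl ` HV \<union> Inr ` {0..<m})"
    and edges: "\<And>u v. u \<in> V \<Longrightarrow> v \<in> V \<Longrightarrow> E u v \<longleftrightarrow> join_E HV HE (empty_V m) empty_E (f u) (f v)"
    using assms unfolding graph_iso_def join_V_def empty_V_def by blast
  define S where "S = {v \<in> V. f v \<in> range Inl}"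
  have image_V: "f ` V = Inl ` HV \<union> Inr ` {0..<m}" using bij by (rule bij_betw_imp_surj_on)
  have "f ` S = f ` V \<inter> range Inl" "f ` (V - S) = f ` V - range Inl"
    unfolding S_def by auto
  then have image_S: "f ` S = Inl ` HV" and image_rest: "f ` (V - S) = Inr ` {0..<m}"
    unfolding image_V by auto
  have "S \<subseteq> V" unfolding S_def by blast
  have "card S = card HV"
    using bij_betw_same_card[OF bij_betw_subset[OF bij \<open>S \<subseteq> V\<close> image_S]]
    by (simp add: card_image)
  moreover have "card (V - S) = m"
    using bij_betw_same_card[OF bij_betw_subset[OF bij Diff_subset image_rest]]
    by (simp add: card_image)
  moreover have "E v u" if vu: "v \<in> V - S" "u \<in> S" for v u
  proof -
    obtain j a where "f v = Inr j" "j < m" "f u = Inl a" "a \<in> HV"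
      using image_S image_rest imageI[of v "V - S" f] imageI[of u S f] vu by auto
    then show ?thesis using vu edges[of v u] by (simp add: S_def empty_V_def)
  qed
  ultimately show ?thesis using that \<open>S \<subseteq> V\<close> by blast
qed

lemma conversion_set_if_adjacent_to_all:
  assumes "S \<subseteq> V" "card S = k" "\<And>v u. v \<in> V - S \<Longrightarrow> u \<in> S \<Longrightarrow> E v u"
  shows "conversion_set V E k S"
proof -
  have "{u \<in> S. E v u} = S" if "v \<in> V - S" for v using assms(3) that by blast
  then have "conv_step V E k S = V" using assms(1,2) unfolding conv_step_def by auto
  then show ?thesis using assms(1) unfolding conversion_set_def by (intro conjI exI[of _ 1]) simp_all
qed

lemma graph_iso_join_empty_of_conversion_set:
  assumes g: "graph V E" and r: "regular V E k" and "k \<ge> 1"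
    and conv: "conversion_set V E k S" and card_S: "card S = k"
  shows "\<exists>t < k. regular S (induced S E) t \<and>
    graph_iso V E (join_V S (empty_V (k - t))) (join_E S (induced S E) (empty_V (k - t)) empty_E)"
proof -
  have S_V: "S \<subseteq> V" using conv unfolding conversion_set_def by blast
  have finV: "finite V" and sym: "\<And>u v. E u v \<Longrightarrow> E v u"
    using g unfolding graph_def by auto
  have adj: "\<And>v u. v \<in> V - S \<Longrightarrow> E v u \<longleftrightarrow> u \<in> S"
    using adjacent_iff_mem_conversion_set[OF g r conv card_S] by blast
  define m where "m = card (V - S)"
  have deg: "degree S (induced S E) s + m = k" if "s \<in> S" for s
  proof -
    have "E s v" if "v \<in> V - S" for v using adj[OF that] sym \<open>s \<in> S\<close> by blast
    then have "degree V E s = degree S (induced S E) s + m"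
      using degree_eq_degree_induced_add[OF g S_V \<open>s \<in> S\<close>] unfolding m_def by blast
    then show ?thesis using r S_V \<open>s \<in> S\<close> unfolding regular_def by auto
  qed
  obtain s where "s \<in> S" using card_S \<open>k \<ge> 1\<close> by fastforce
  then have "k < card V" using regular_degree_less_card[OF g r] S_V by blast
  moreover have "card V = k + m"
    using card_mono[OF finV S_V] card_S finV S_V unfolding m_def
    by (simp add: card_Diff_subset finite_subset)
  ultimately have "0 < m" "m \<le> k" using deg[OF \<open>s \<in> S\<close>] by linarith+
  then have "k - m < k" and "k - (k - m) = m" by auto
  moreover have "regular S (induced S E) (k - m)"
    using deg unfolding regular_def by (metis add_diff_cancel_right')
  moreover have "graph_iso V E (join_V S (empty_V m)) (join_E S (induced S E) (empty_V m) empty_E)"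
    unfolding m_def using graph_iso_join_empty[OF g S_V] adj by blast
  ultimately show ?thesis by (intro exI[of _ "k - m"]) simp
qed

lemma conversion_number_join_empty:
  assumes "graph V E" "card HV = k" "0 < m"
    and "graph_iso V E (join_V HV (empty_V m)) (join_E HV HE (empty_V m) empty_E)"
  shows "conversion_number V E k = k"
proof -
  obtain S where S_V: "S \<subseteq> V" and card_S: "card S = k" and card_rest: "card (V - S) = m"
    and adj: "\<And>v u. v \<in> V - S \<Longrightarrow> u \<in> S \<Longrightarrow> E v u"
    using assms(4) by (rule graph_iso_join_emptyE) (use assms(2) in blast)
  have "finite V" using assms(1) unfolding graph_def by blast
  then have "card (V - S) = card V - k"
    using S_V card_S by (simp add: card_Diff_subset finite_subset)
  then have "k < card V" using card_rest \<open>0 < m\<close> by linarith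
  moreover have "conversion_set V E k S"
    using S_V card_S adj by (rule conversion_set_if_adjacent_to_all)
  ultimately show ?thesis using conversion_number_eqI[OF assms(1)] card_S by blast
qed

theorem proposition2p2:
  fixes V :: "'a set" and E :: "'a \<Rightarrow> 'a \<Rightarrow> bool" and k :: nat
  assumes "k \<ge> 1" and "graph V E" and "regular V E k"
  shows "conversion_number V E k = k \<longleftrightarrow>
    (\<exists>t (HV :: 'a set) HE. t < k \<and> graph HV HE \<and> regular HV HE t \<and> card HV = k \<and>
       graph_iso V E (join_V HV (empty_V (k - t))) (join_E HV HE (empty_V (k - t)) empty_E))"
proof
  assume "conversion_number V E k = k"
  then obtain S where conv: "conversion_set V E k S" and card_S: "card S = k"
    using conversion_number_attained[of V E k] by auto
  then have "S \<subseteq> V" unfolding conversion_set_def by blast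
  then show "\<exists>t (HV :: 'a set) HE. t < k \<and> graph HV HE \<and> regular HV HE t \<and> card HV = k \<and>
       graph_iso V E (join_V HV (empty_V (k - t))) (join_E HV HE (empty_V (k - t)) empty_E)"
    using graph_iso_join_empty_of_conversion_set[OF assms(2,3,1) conv card_S]
      graph_induced[OF assms(2)] card_S by blast
next
  assume "\<exists>t (HV :: 'a set) HE. t < k \<and> graph HV HE \<and> regular HV HE t \<and> card HV = k \<and>
       graph_iso V E (join_V HV (empty_V (k - t))) (join_E HV HE (empty_V (k - t)) empty_E)"
  then show "conversion_number V E k = k"
    using conversion_number_join_empty[OF assms(2)] by (meson zero_less_diff)
qed

end
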